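(* Let $\mathbb{F}_2$ be the free group on $a,b$ with word length $\ell$ with respect to $\{a^{\pm1},b^{\pm1}\}$, and let $\alpha(n):=\min\{\ell(w)\mid w\in\gamma_n(\mathbb{F}_2)\setminus\{e\}\}$ and $\alpha:=\lim_{n\to\infty}\frac{\log_2(\alpha(n))}{\log_2(n)}$. There is a constant $C''>0$ such that $\alpha(n)\le C''\cdot n^{\log_\varphi(2)}$ for infinitely many $n\in\mathbb{N}$; consequently $\alpha\le\log_\varphi(2)$, where $\varphi$ is the golden ratio.
   Context: $\gamma_n(\mathbb{F}_2)$ denotes the $n$-th term of the lower central series: $\gamma_1(\mathbb{F}_2)=\mathbb{F}_2$, $\gamma_{n+1}(\mathbb{F}_2)=[\gamma_n(\mathbb{F}_2),\mathbb{F}_2]$. The limit defining $\alpha$ is known to exist. *)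

theory Defs
  imports Complex_Main
begin

text \<open>The free group F_2 on generators a, b, realised as freely reduced words.
  A letter is a pair (g, i): g = False means a, g = True means b;
  i = True means the inverse letter.\<close>

type_synonym letter = "bool \<times> bool"

definition inv_letter :: "letter \<Rightarrow> letter" where
  "inv_letter x = (fst x, \<not> snd x)"

fun red :: "letter list \<Rightarrow> letter list" where
  "red [] = []"
| "red (x # xs) = (case red xs of [] \<Rightarrow> [x]
                   | y # ys \<Rightarrow> (if y = inv_letter x then ys else x # y # ys))"

definition F2 :: "letter list set" where
  "F2 = {w. red w = w}"

definition fmul :: "letter list \<Rightarrow> letter list \<Rightarrow> letter list" where
  "fmul x y = red (x @ y)"

definition finv :: "letter list \<Rightarrow> letter list" where
  "finv x = rev (map inv_letter x)"

definition wlen :: "letter list \<Rightarrow> nat" where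
  "wlen w = length (red w)"

definition fcomm :: "letter list \<Rightarrow> letter list \<Rightarrow> letter list" where
  "fcomm x y = fmul (fmul (finv x) (finv y)) (fmul x y)"

inductive_set fgen :: "letter list set \<Rightarrow> letter list set" for S where
  fgen_one: "[] \<in> fgen S"
| fgen_base: "s \<in> S \<Longrightarrow> s \<in> fgen S"
| fgen_mul: "x \<in> fgen S \<Longrightarrow> y \<in> fgen S \<Longrightarrow> fmul x y \<in> fgen S"
| fgen_inv: "x \<in> fgen S \<Longrightarrow> finv x \<in> fgen S"

text \<open>Lower central series: lcs 1 = F_2, lcs (n+1) = [lcs n, F_2].
  (lcs 0 is set to F_2 by convention; it is never used.)\<close>
fun lcs :: "nat \<Rightarrow> letter list set" where
  "lcs 0 = F2"
| "lcs (Suc 0) = F2"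
| "lcs (Suc (Suc n)) = fgen {fcomm x y | x y. x \<in> lcs (Suc n) \<and> y \<in> F2}"

definition alpha_fun :: "nat \<Rightarrow> nat" where
  "alpha_fun n = (LEAST k. \<exists>w \<in> lcs n. w \<noteq> [] \<and> wlen w = k)"

definition golden_ratio :: real where
  "golden_ratio = (1 + sqrt 5) / 2"

end

theory Submission
  imports Defs "HOL-Algebra.Group" "HOL-Number_Theory.Fib"
begin

text \<open>Let u(0) = a, u(1) = b and u(k+2) = [u(k+1), u(k)]. Since [\<gamma>(i), \<gamma>(j)] \<subseteq> \<gamma>(i+j),
  the element u(k) lies in \<gamma>(F(k+1)), F the Fibonacci numbers. Thanks to cancellations u(k) has
  word length at most 3 \<cdot> 2^k, and it is nontrivial because its image in A5 is. Since
  \<phi>^k \<le> \<phi> F(k+1), this gives \<alpha>(F(k+1)) \<le> 3 \<cdot> 2^k \<le> 6 F(k+1)^(log_\<phi> 2); the bound on the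
  limit follows along the subsequence of Fibonacci numbers.\<close>

section \<open>Free reduction\<close>

definition red_cons :: "letter \<Rightarrow> letter list \<Rightarrow> letter list" where
  "red_cons x w = (case w of [] \<Rightarrow> [x] | y # ys \<Rightarrow> (if y = inv_letter x then ys else x # y # ys))"

lemma red_Cons_eq: "red (x # xs) = red_cons x (red xs)"
  by (simp add: red_cons_def)

declare red.simps(2)[simp del]

lemma inv_letter_inv_letter [simp]: "inv_letter (inv_letter x) = x"
  by (simp add: inv_letter_def)

fun reduced :: "letter list \<Rightarrow> bool" where
  "reduced [] = True"
| "reduced [x] = True"
| "reduced (x # y # ys) = (y \<noteq> inv_letter x \<and> reduced (y # ys))"

lemma reduced_ConsD: "reduced (x # xs) \<Longrightarrow> reduced xs"
  by (cases xs) auto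

lemma reduced_red_cons: "reduced w \<Longrightarrow> reduced (red_cons x w)"
  by (cases w) (auto simp: red_cons_def dest: reduced_ConsD)

lemma reduced_red: "reduced (red w)"
  by (induction w) (auto simp: red_Cons_eq reduced_red_cons)

lemma red_reduced: "reduced w \<Longrightarrow> red w = w"
proof (induction w)
  case (Cons x xs)
  then have "red xs = xs" using reduced_ConsD by blast
  then show ?case using Cons.prems by (cases xs) (auto simp: red_Cons_eq red_cons_def)
qed simp

lemma red_red [simp]: "red (red w) = red w"
  by (simp add: red_reduced reduced_red)

lemma red_cons_cancel: "reduced w \<Longrightarrow> red_cons x (red_cons (inv_letter x) w) = w"
  by (cases w rule: reduced.cases) (auto simp: red_cons_def)

lemma red_append: "red (xs @ ys) = foldr red_cons xs (red ys)"
  by (induction xs) (auto simp: red_Cons_eq)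

lemma reduced_foldr_red_cons: "reduced v \<Longrightarrow> reduced (foldr red_cons w v)"
  by (induction w) (auto simp: reduced_red_cons)

lemma foldr_red_cons_red_cons:
  assumes "reduced v"
  shows "foldr red_cons (red_cons x w) v = red_cons x (foldr red_cons w v)"
proof (cases w)
  case (Cons y ys)
  show ?thesis
  proof (cases "y = inv_letter x")
    case True
    have "red_cons x (red_cons (inv_letter x) (foldr red_cons ys v)) = foldr red_cons ys v"
      by (rule red_cons_cancel[OF reduced_foldr_red_cons[OF assms]])
    with Cons True show ?thesis by (simp add: red_cons_def)
  qed (use Cons in \<open>simp add: red_cons_def\<close>)
qed (simp add: red_cons_def)

lemma foldr_red_cons_red: "reduced v \<Longrightarrow> foldr red_cons (red x) v = foldr red_cons x v"
  by (induction x) (auto simp: red_Cons_eq foldr_red_cons_red_cons)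

lemma red_append_red_left [simp]: "red (red x @ y) = red (x @ y)"
  by (simp add: red_append foldr_red_cons_red reduced_red)

lemma red_append_red_right [simp]: "red (x @ red y) = red (x @ y)"
  by (simp add: red_append)

lemma red_length_le: "length (red w) \<le> length w"
proof (induction w)
  case (Cons x xs)
  have "length (red_cons x v) \<le> Suc (length v)" for v
    by (cases v) (auto simp: red_cons_def)
  then show ?case using Cons by (simp add: red_Cons_eq) (meson Suc_le_mono le_trans)
qed simp

lemma finv_append [simp]: "finv (x @ y) = finv y @ finv x"
  by (simp add: finv_def)

lemma finv_finv [simp]: "finv (finv x) = x"
  by (simp add: finv_def rev_map comp_def)

lemma finv_Nil [simp]: "finv [] = []"
  by (simp add: finv_def)

lemma finv_Cons: "finv (x # w) = finv w @ [inv_letter x]"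
  by (simp add: finv_def)

lemma red_finv_append_self: "red (finv w @ w) = []"
proof (induction w)
  case (Cons x w)
  have "red (inv_letter x # x # w) = red w"
    using red_cons_cancel[of "red w" "inv_letter x"] reduced_red by (simp add: red_Cons_eq)
  then have "red (finv (x # w) @ x # w) = red (finv w @ w)"
    by (simp add: finv_Cons red_append)
  with Cons show ?case by simp
qed simp

lemma reduced_append:
  "reduced (xs @ ys) \<longleftrightarrow>
     reduced xs \<and> reduced ys \<and> (xs \<noteq> [] \<and> ys \<noteq> [] \<longrightarrow> hd ys \<noteq> inv_letter (last xs))"
proof (induction xs rule: reduced.induct)
  case (2 x)
  then show ?case by (cases ys) auto
qed auto

lemma reduced_finv: "reduced w \<Longrightarrow> reduced (finv w)"
proof (induction w rule: reduced.induct)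
  case (3 x y ys)
  then have "reduced (finv (y # ys))" by simp
  moreover have "last (finv (y # ys)) = inv_letter y" by (simp add: finv_def)
  ultimately show ?case using "3.prems" by (auto simp: finv_Cons reduced_append inv_letter_def)
qed (simp_all add: finv_def)

lemma F2_iff_reduced: "w \<in> F2 \<longleftrightarrow> reduced w"
  using reduced_red[of w] red_reduced[of w] by (auto simp: F2_def)

lemma red_in_F2 [simp]: "red w \<in> F2"
  by (simp add: F2_iff_reduced reduced_red)

lemma Nil_in_F2 [simp]: "[] \<in> F2"
  by (simp add: F2_def)

lemma finv_in_F2: "w \<in> F2 \<Longrightarrow> finv w \<in> F2"
  by (simp add: F2_iff_reduced reduced_finv)

lemma (in group) mult_inv_cancel_left: "x \<in> carrier G \<Longrightarrow> y \<in> carrier G \<Longrightarrow> x \<otimes> (inv x \<otimes> y) = y"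
  by (metis inv_closed m_assoc r_inv l_one)

lemma (in group) inv_mult_cancel_left: "x \<in> carrier G \<Longrightarrow> y \<in> carrier G \<Longrightarrow> inv x \<otimes> (x \<otimes> y) = y"
  by (metis inv_closed m_assoc l_inv l_one)

definition F2_group :: "letter list monoid" where
  "F2_group = \<lparr>carrier = F2, mult = fmul, one = []\<rparr>"

lemma carrier_F2_group [simp]: "carrier F2_group = F2"
  by (simp add: F2_group_def)

lemma one_F2_group [simp]: "one F2_group = []"
  by (simp add: F2_group_def)

lemma F2_group_mult: "mult F2_group = fmul"
  by (simp add: F2_group_def)

lemma group_F2_group: "group F2_group"
proof (rule groupI, simp_all add: F2_group_mult)
  fix x y z
  show "fmul (fmul x y) z = fmul x (fmul y z)"
    by (metis fmul_def append_assoc red_append_red_left red_append_red_right)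
  show "fmul x y \<in> F2" by (simp add: fmul_def)
  assume "x \<in> F2"
  then show "fmul [] x = x" by (simp add: fmul_def F2_def)
  show "\<exists>y\<in>F2. fmul y x = []"
    using \<open>x \<in> F2\<close> by (intro bexI[of _ "finv x"]) (auto simp: fmul_def red_finv_append_self finv_in_F2)
qed

interpretation F: group F2_group
  by (rule group_F2_group)

abbreviation F2_mult (infixl "\<cdot>" 70) where "x \<cdot> y \<equiv> x \<otimes>\<^bsub>F2_group\<^esub> y"
abbreviation F2_inv where "F2_inv x \<equiv> inv\<^bsub>F2_group\<^esub> x"

lemma F2_mult_eq: "x \<cdot> y = fmul x y"
  by (simp add: F2_group_mult)

lemma F2_inv_eq: "x \<in> F2 \<Longrightarrow> F2_inv x = finv x"
  by (rule F.inv_equality) (auto simp: F2_mult_eq fmul_def red_finv_append_self finv_in_F2)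

lemma red_append_mult: "red (x @ y) = red x \<cdot> red y"
  by (simp add: F2_mult_eq fmul_def)

lemma red_finv: "red (finv w) = F2_inv (red w)"
  by (rule F.inv_equality[symmetric]) (simp_all add: red_append_mult[symmetric] red_finv_append_self)

lemma finv_red: "finv (red w) = red (finv w)"
  by (simp add: red_finv F2_inv_eq)

lemma fcomm_eq: "x \<in> F2 \<Longrightarrow> y \<in> F2 \<Longrightarrow> fcomm x y = F2_inv x \<cdot> F2_inv y \<cdot> (x \<cdot> y)"
  by (simp add: F2_inv_eq F2_mult_eq fcomm_def)

lemma fcomm_in_F2 [simp]: "fcomm x y \<in> F2"
  by (simp add: fcomm_def fmul_def)

lemma fmul_in_F2 [simp]: "fmul x y \<in> F2"
  by (simp add: fmul_def)

lemma F2_mult_in_F2 [simp]: "x \<cdot> y \<in> F2"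
  by (simp add: F2_mult_eq)

lemma F2_inv_in_F2 [simp]: "x \<in> F2 \<Longrightarrow> F2_inv x \<in> F2"
  by (simp add: F2_inv_eq finv_in_F2)

lemma F2_inv_Nil [simp]: "F2_inv [] = []"
  using F.inv_one by simp

lemma F2_mult_Nil [simp]: "x \<in> F2 \<Longrightarrow> x \<cdot> [] = x" "x \<in> F2 \<Longrightarrow> [] \<cdot> x = x"
  using F.r_one F.l_one by simp_all

lemmas F2_group_normalize = F.m_assoc F.inv_mult_group F.inv_inv F.r_inv F.l_inv F.r_one F.l_one
  F.m_closed F.inv_closed F.mult_inv_cancel_left F.inv_mult_cancel_left

text \<open>A rearrangement of the Hall--Witt identity.\<close>

lemma fcomm_fcomm_eq:
  assumes "x \<in> F2" "z \<in> F2" "w \<in> F2"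
  shows "fcomm x (fcomm z w) =
    F2_inv w \<cdot> (F2_inv x \<cdot> fcomm (F2_inv (fcomm (F2_inv x) (F2_inv w))) z \<cdot> x
             \<cdot> (F2_inv z \<cdot> fcomm (fcomm x (F2_inv z)) (F2_inv w) \<cdot> z)) \<cdot> w"
  using assms by (simp add: fcomm_eq F2_group_normalize)

section \<open>Lower central series\<close>

lemma fgen_subset_F2: "x \<in> fgen S \<Longrightarrow> S \<subseteq> F2 \<Longrightarrow> x \<in> F2"
  by (induction rule: fgen.induct) (auto simp: finv_in_F2)

lemma fgen_mono: "S \<subseteq> T \<Longrightarrow> fgen S \<subseteq> fgen T"
proof
  show "x \<in> fgen S \<Longrightarrow> S \<subseteq> T \<Longrightarrow> x \<in> fgen T" for x
    by (induction rule: fgen.induct) (auto intro: fgen.intros)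
qed

lemma lcs_subset_F2: "x \<in> lcs n \<Longrightarrow> x \<in> F2"
proof (induction n rule: lcs.induct)
  case (3 n)
  then show ?case by (auto elim: fgen_subset_F2)
qed auto

lemma lcs_Nil: "[] \<in> lcs n"
  by (cases n rule: lcs.cases) (auto intro: fgen.intros)

lemma lcs_mult_closed: "x \<in> lcs n \<Longrightarrow> y \<in> lcs n \<Longrightarrow> x \<cdot> y \<in> lcs n"
  by (cases n rule: lcs.cases) (auto simp: F2_mult_eq intro: fgen.intros)

lemma lcs_inv_closed: "x \<in> lcs n \<Longrightarrow> F2_inv x \<in> lcs n"
  using lcs_subset_F2[of x n]
  by (cases n rule: lcs.cases) (auto simp: F2_inv_eq finv_in_F2 intro: fgen.intros)

lemma fcomm_in_lcs_Suc: "x \<in> lcs n \<Longrightarrow> y \<in> F2 \<Longrightarrow> fcomm x y \<in> lcs (Suc n)"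
  by (cases n) (auto intro: fgen.intros)

lemma lcs_Suc_subset: "lcs (Suc n) \<subseteq> lcs n"
proof (induction n rule: lcs.induct)
  case (3 n)
  have "fgen {fcomm x y |x y. x \<in> lcs (Suc (Suc n)) \<and> y \<in> F2}
      \<subseteq> fgen {fcomm x y |x y. x \<in> lcs (Suc n) \<and> y \<in> F2}"
    using "3.IH" by (intro fgen_mono) blast
  then show ?case by (metis lcs.simps(3))
qed (auto elim: fgen_subset_F2)

lemma lcs_conj_closed: "x \<in> lcs n \<Longrightarrow> g \<in> F2 \<Longrightarrow> F2_inv g \<cdot> x \<cdot> g \<in> lcs n"
proof -
  assume x: "x \<in> lcs n" and g: "g \<in> F2"
  have "fcomm x g \<in> lcs n"
    using fcomm_in_lcs_Suc[OF x g] lcs_Suc_subset by blast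
  then have "x \<cdot> fcomm x g \<in> lcs n"
    using x lcs_mult_closed by blast
  moreover have "x \<cdot> fcomm x g = F2_inv g \<cdot> x \<cdot> g"
    using lcs_subset_F2[OF x] g by (simp add: fcomm_eq F2_group_normalize)
  ultimately show ?thesis by simp
qed

text \<open>To show \<open>[x, y] \<in> \<gamma>\<^sub>m\<close> for all \<open>y\<close> in the subgroup generated by commutators \<open>[z, w]\<close>,
  it suffices to treat the generators, since \<open>[x, g h] = [x, h] \<cdot> h\<inverse> [x, g] h\<close> and
  \<open>[x, g\<inverse>] = [g x g\<inverse>, g]\<inverse>\<close> with conjugates of \<open>x\<close> staying in \<open>\<gamma>\<^sub>i\<close>.\<close>

lemma fcomm_fgen_in_lcs:
  assumes gen: "\<And>x z w. x \<in> lcs i \<Longrightarrow> z \<in> T \<Longrightarrow> w \<in> F2 \<Longrightarrow> fcomm x (fcomm z w) \<in> lcs m"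
  shows "y \<in> fgen {fcomm z w | z w. z \<in> T \<and> w \<in> F2} \<Longrightarrow> x \<in> lcs i \<Longrightarrow> fcomm x y \<in> lcs m"
proof (induction arbitrary: x rule: fgen.induct)
  case fgen_one
  then have "fcomm x [] = []"
    using lcs_subset_F2 by (simp add: fcomm_eq F2_group_normalize)
  then show ?case by (simp add: lcs_Nil)
next
  case (fgen_base s)
  then show ?case using gen by blast
next
  case (fgen_mul g h)
  have F2: "x \<in> F2" "g \<in> F2" "h \<in> F2"
    using fgen_mul lcs_subset_F2 by (auto elim: fgen_subset_F2)
  then have "fcomm x (fmul g h) = fcomm x h \<cdot> (F2_inv h \<cdot> fcomm x g \<cdot> h)"
    by (simp add: fcomm_eq F2_mult_eq[symmetric] F2_group_normalize)
  then show ?case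
    using fgen_mul lcs_conj_closed lcs_mult_closed F2 by simp
next
  case (fgen_inv g)
  have F2: "x \<in> F2" "g \<in> F2"
    using fgen_inv lcs_subset_F2 by (auto elim: fgen_subset_F2)
  have "g \<cdot> x \<cdot> F2_inv g \<in> lcs i"
    using lcs_conj_closed[OF fgen_inv.prems, of "F2_inv g"] F2 by simp
  moreover have "fcomm x (finv g) = F2_inv (fcomm (g \<cdot> x \<cdot> F2_inv g) g)"
    using F2 by (simp add: fcomm_eq F2_inv_eq[symmetric] F2_group_normalize)
  ultimately show ?case
    using fgen_inv.IH lcs_inv_closed by simp
qed

lemma fcomm_in_lcs_add: "x \<in> lcs i \<Longrightarrow> y \<in> lcs j \<Longrightarrow> fcomm x y \<in> lcs (i + j)"
proof (induction j arbitrary: i x y rule: nat_less_induct)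
  case (1 j)
  consider "j = 0" | "j = 1" | j' where "j = Suc (Suc j')"
    by (metis One_nat_def not0_implies_Suc)
  then show ?case
  proof cases
    case 1
    have F2: "x \<in> F2" "y \<in> F2"
      using "1.prems" lcs_subset_F2 by auto
    then have "fcomm x y = F2_inv x \<cdot> (F2_inv y \<cdot> x \<cdot> y)"
      by (simp add: fcomm_eq F2_group_normalize)
    then show ?thesis
      using "1.prems" F2 \<open>j = 0\<close> lcs_mult_closed lcs_inv_closed lcs_conj_closed by simp
  next
    case 2
    then show ?thesis using "1.prems" fcomm_in_lcs_Suc lcs_subset_F2 by simp
  next
    case 3
    have IH: "x \<in> lcs i \<Longrightarrow> y \<in> lcs (Suc j') \<Longrightarrow> fcomm x y \<in> lcs (i + Suc j')" for i x y
      using "1.IH" 3 by blast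
    have gen: "fcomm x (fcomm z w) \<in> lcs (i + j)"
      if x: "x \<in> lcs i" and z: "z \<in> lcs (Suc j')" and w: "w \<in> F2" for x z w
    proof -
      have F2: "x \<in> F2" "z \<in> F2"
        using x z lcs_subset_F2 by auto
      have "fcomm (F2_inv x) (F2_inv w) \<in> lcs (Suc i)"
        using x w by (simp add: fcomm_in_lcs_Suc lcs_inv_closed)
      then have "fcomm (F2_inv (fcomm (F2_inv x) (F2_inv w))) z \<in> lcs (i + j)"
        using IH[of _ "Suc i"] z 3 by (simp add: lcs_inv_closed)
      moreover have "fcomm x (F2_inv z) \<in> lcs (i + Suc j')"
        using IH x z by (simp add: lcs_inv_closed)
      then have "fcomm (fcomm x (F2_inv z)) (F2_inv w) \<in> lcs (i + j)"
        using fcomm_in_lcs_Suc[OF _ F2_inv_in_F2[OF w]] 3 by (metis add_Suc_right)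
      ultimately show ?thesis
        using F2 w by (simp add: fcomm_fcomm_eq lcs_mult_closed lcs_conj_closed)
    qed
    have "y \<in> fgen {fcomm z w | z w. z \<in> lcs (Suc j') \<and> w \<in> F2}"
      using "1.prems"(2) 3 by simp
    then show ?thesis
      using fcomm_fgen_in_lcs[OF gen] "1.prems"(1) by blast
  qed
qed

section \<open>Fibonacci commutators\<close>

definition letter_a :: letter where "letter_a = (False, False)"
definition letter_b :: letter where "letter_b = (True, False)"

fun fcomm_seq :: "nat \<Rightarrow> letter list" where
  "fcomm_seq 0 = [letter_a]"
| "fcomm_seq (Suc 0) = [letter_b]"
| "fcomm_seq (Suc (Suc k)) = fcomm (fcomm_seq (Suc k)) (fcomm_seq k)"

lemma fcomm_seq_in_lcs: "fcomm_seq k \<in> lcs (fib (Suc k))"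
proof (induction k rule: fcomm_seq.induct)
  case 3
  then show ?case by (simp add: fcomm_in_lcs_add)
qed (simp_all add: F2_iff_reduced)

text \<open>If \<open>u\<^sub>k = T S\<inverse>\<close> and \<open>u\<^sub>k\<^sub>+\<^sub>1 = S M T\<inverse>\<close>, then after cancellation
  \<open>u\<^sub>k\<^sub>+\<^sub>2 = u\<^sub>k\<^sub>+\<^sub>1\<inverse> u\<^sub>k\<inverse> u\<^sub>k\<^sub>+\<^sub>1 u\<^sub>k = T M\<inverse> T\<inverse> S M S\<inverse>\<close>, which has the same shape for the triple
  \<open>(T M\<inverse>, S, T\<inverse> S M)\<close>, whose total length is twice that of \<open>(S, T, M)\<close>.\<close>

fun fcomm_seq_words :: "nat \<Rightarrow> letter list \<times> letter list \<times> letter list" where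
  "fcomm_seq_words 0 = ([], [letter_a], [letter_b, letter_a])"
| "fcomm_seq_words (Suc k) = (case fcomm_seq_words k of (S, T, M) \<Rightarrow> (T @ finv M, S, finv T @ S @ M))"

lemma fcomm_seq_words_eq:
  assumes "fcomm_seq_words k = (S, T, M)"
  shows "fcomm_seq k = red (T @ finv S) \<and> fcomm_seq (Suc k) = red (S @ M @ finv T)"
  using assms
proof (induction k arbitrary: S T M)
  case 0
  then show ?case
    by (auto simp: red_Cons_eq red_cons_def letter_a_def letter_b_def inv_letter_def finv_def)
next
  case (Suc k)
  obtain S0 T0 M0 where words: "fcomm_seq_words k = (S0, T0, M0)"
    by (cases "fcomm_seq_words k")
  with Suc.prems have "S = T0 @ finv M0" "T = S0" "M = finv T0 @ S0 @ M0"
    by auto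
  with Suc.IH[OF words] show ?case
    by (simp add: red_append_mult red_finv fcomm_eq F2_group_normalize)
qed

lemma fcomm_seq_words_length:
  "fcomm_seq_words k = (S, T, M) \<Longrightarrow> length S + length T + length M = 3 * 2 ^ k"
proof (induction k arbitrary: S T M)
  case (Suc k)
  then show ?case
    by (cases "fcomm_seq_words k") (auto simp: finv_def)
qed auto

lemma wlen_fcomm_seq_le: "wlen (fcomm_seq k) \<le> 3 * 2 ^ k"
proof (cases k)
  case (Suc j)
  obtain S T M where words: "fcomm_seq_words j = (S, T, M)"
    by (cases "fcomm_seq_words j")
  have "wlen (fcomm_seq (Suc j)) = length (red (S @ M @ finv T))"
    using fcomm_seq_words_eq[OF words] by (simp add: wlen_def)
  also have "\<dots> \<le> length (S @ M @ finv T)"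
    by (rule red_length_le)
  also have "\<dots> \<le> 3 * 2 ^ j"
    using fcomm_seq_words_length[OF words] by (simp add: finv_def)
  finally show ?thesis
    using Suc by simp
qed (simp add: wlen_def red_Cons_eq red_cons_def)

section \<open>Nontriviality in a quotient \<open>A\<^sub>5\<close>\<close>

text \<open>The homomorphism \<open>F\<^sub>2 \<rightarrow> A\<^sub>5\<close> given by \<open>a \<mapsto> (0 1 2 3 4)\<close>, \<open>b \<mapsto> (0 1 3 4 2)\<close>, with
  permutations of \<open>{0..<5}\<close> represented by their value tables. The images of
  \<open>(u\<^sub>k, u\<^sub>k\<inverse>, u\<^sub>k\<^sub>+\<^sub>1, u\<^sub>k\<^sub>+\<^sub>1\<inverse>)\<close> are periodic in \<open>k\<close> with period 5, and within one period the
  image of \<open>u\<^sub>k\<close> is never the identity, so no \<open>u\<^sub>k\<close> is trivial.\<close>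

definition perm_of_table :: "nat list \<Rightarrow> nat \<Rightarrow> nat" where
  "perm_of_table p i = (if i < 5 then p ! i else i)"

definition letter_perm :: "letter \<Rightarrow> nat \<Rightarrow> nat" where
  "letter_perm x = perm_of_table
     (if fst x then (if snd x then [2,0,4,1,3] else [1,3,0,4,2])
               else (if snd x then [4,0,1,2,3] else [1,2,3,4,0]))"

lemma less_5_cases: "(i::nat) < 5 \<longleftrightarrow> i = 0 \<or> i = 1 \<or> i = 2 \<or> i = 3 \<or> i = 4"
  by auto

lemma letter_perm_less_5: "i < 5 \<Longrightarrow> letter_perm x i < 5"
  unfolding less_5_cases by (cases x) (auto simp: letter_perm_def perm_of_table_def)

lemma letter_perm_inv_letter: "letter_perm x \<circ> letter_perm (inv_letter x) = id"
proof
  fix i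
  show "(letter_perm x \<circ> letter_perm (inv_letter x)) i = id i"
    by (cases "i < 5"; cases x)
       (auto simp: less_5_cases letter_perm_def perm_of_table_def inv_letter_def)
qed

definition word_perm :: "letter list \<Rightarrow> nat \<Rightarrow> nat" where
  "word_perm w = foldr (\<lambda>x f. letter_perm x \<circ> f) w id"

lemma word_perm_Nil [simp]: "word_perm [] = id"
  by (simp add: word_perm_def)

lemma word_perm_Cons: "word_perm (x # w) = letter_perm x \<circ> word_perm w"
  by (simp add: word_perm_def)

lemma word_perm_append: "word_perm (v @ w) = word_perm v \<circ> word_perm w"
  by (induction v) (auto simp: word_perm_Cons)

lemma word_perm_red_cons: "word_perm (red_cons x w) = letter_perm x \<circ> word_perm w"
proof (cases w)
  case (Cons y ys)
  have "letter_perm x \<circ> letter_perm (inv_letter x) \<circ> word_perm ys = word_perm ys"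
    by (simp add: letter_perm_inv_letter)
  with Cons show ?thesis
    by (auto simp: red_cons_def word_perm_Cons comp_assoc)
qed (simp add: red_cons_def word_perm_Cons)

lemma word_perm_red: "word_perm (red w) = word_perm w"
  by (induction w) (auto simp: red_Cons_eq word_perm_red_cons word_perm_Cons)

lemma word_perm_less_5: "i < 5 \<Longrightarrow> word_perm w i < 5"
  by (induction w arbitrary: i) (auto simp: word_perm_Cons letter_perm_less_5)

definition table :: "(nat \<Rightarrow> nat) \<Rightarrow> nat list" where
  "table f = map f [0..<5]"

definition table_comp :: "nat list \<Rightarrow> nat list \<Rightarrow> nat list" where
  "table_comp p q = map (\<lambda>i. p ! (q ! i)) [0..<5]"

lemma table_word_perm_append:
  "table (word_perm (v @ w)) = table_comp (table (word_perm v)) (table (word_perm w))"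
  by (simp add: table_def table_comp_def word_perm_append word_perm_less_5)

definition perm_table_step ::
    "nat list \<times> nat list \<times> nat list \<times> nat list \<Rightarrow> nat list \<times> nat list \<times> nat list \<times> nat list" where
  "perm_table_step t = (case t of (p, p', q, q') \<Rightarrow>
     (q, q', table_comp q' (table_comp p' (table_comp q p)), table_comp p' (table_comp q' (table_comp p q))))"

definition perm_tables :: "nat \<Rightarrow> nat list \<times> nat list \<times> nat list \<times> nat list" where
  "perm_tables k =
     (table (word_perm (fcomm_seq k)), table (word_perm (finv (fcomm_seq k))),
      table (word_perm (fcomm_seq (Suc k))), table (word_perm (finv (fcomm_seq (Suc k)))))"

lemma perm_tables_0: "perm_tables 0 = ([1,2,3,4,0], [4,0,1,2,3], [1,3,0,4,2], [2,0,4,1,3])"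
  by (simp add: perm_tables_def upt_rec table_def word_perm_def letter_perm_def perm_of_table_def
      letter_a_def letter_b_def finv_def inv_letter_def)

lemma perm_tables_Suc: "perm_tables (Suc k) = perm_table_step (perm_tables k)"
proof -
  have "fcomm_seq (Suc (Suc k)) =
      red (finv (fcomm_seq (Suc k)) @ finv (fcomm_seq k) @ fcomm_seq (Suc k) @ fcomm_seq k)"
    by (simp add: fcomm_def fmul_def)
  then show ?thesis
    by (simp add: perm_tables_def perm_table_step_def finv_red word_perm_red table_word_perm_append)
qed

lemma perm_tables_add_5: "perm_tables (k + 5) = perm_tables k"
proof (induction k)
  case 0
  show ?case
    by (simp add: numeral_eq_Suc perm_tables_Suc perm_tables_0 perm_table_step_def table_comp_def)
next
  case (Suc k)
  then show ?case by (metis add_Suc perm_tables_Suc)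
qed

lemma fst_perm_tables_neq_id: "fst (perm_tables k) \<noteq> table id"
proof (induction k rule: less_induct)
  case (less k)
  show ?case
  proof (cases "k < 5")
    case True
    then show ?thesis
      unfolding less_5_cases
      by (elim disjE) (simp_all add: numeral_eq_Suc perm_tables_Suc perm_tables_0 perm_table_step_def
          table_comp_def table_def upt_rec)
  next
    case False
    then obtain j where "k = j + 5"
      by (metis add.commute le_Suc_ex not_less)
    then show ?thesis
      using less.IH[of j] perm_tables_add_5 by simp
  qed
qed

lemma fcomm_seq_ne_Nil: "fcomm_seq k \<noteq> []"
  using fst_perm_tables_neq_id[of k] by (auto simp: perm_tables_def)

section \<open>The growth estimate\<close>

lemma alpha_fun_le_wlen: "w \<in> lcs n \<Longrightarrow> w \<noteq> [] \<Longrightarrow> alpha_fun n \<le> wlen w"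
  unfolding alpha_fun_def by (rule Least_le) blast

lemma alpha_fun_fib_le: "alpha_fun (fib (Suc k)) \<le> 3 * 2 ^ k"
  using alpha_fun_le_wlen[OF fcomm_seq_in_lcs fcomm_seq_ne_Nil] wlen_fcomm_seq_le le_trans
  by blast

lemma golden_ratio_gt_1: "golden_ratio > 1"
proof -
  have "sqrt 5 > 1" by simp
  then show ?thesis by (simp add: golden_ratio_def)
qed

lemma golden_ratio_pow_le_fib: "golden_ratio ^ k \<le> golden_ratio * real (fib (Suc k))"
proof (induction k rule: fib.induct)
  case (3 k)
  have "golden_ratio ^ Suc (Suc k) = golden_ratio ^ Suc k + golden_ratio ^ k"
    by (simp add: golden_ratio_def field_simps)
  with 3 show ?case
    by (simp add: distrib_left)
qed (use golden_ratio_gt_1 in simp_all)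

lemma le_fib_Suc: "k \<le> fib (Suc k)"
proof (induction k rule: fib.induct)
  case (3 k)
  then show ?case using fib_neq_0_nat[of "Suc k"] by simp
qed simp_all

lemma two_pow_le_fib_powr: "2 ^ k \<le> 2 * real (fib (Suc k)) powr log golden_ratio 2"
proof -
  define e where "e = log golden_ratio 2"
  have phi_powr_e: "golden_ratio powr e = 2"
    unfolding e_def using golden_ratio_gt_1 by simp
  have "(2::real) ^ k = (golden_ratio ^ k) powr e"
    using golden_ratio_gt_1 by (simp add: powr_realpow[symmetric] powr_powr mult.commute
        flip: phi_powr_e)
  also have "\<dots> \<le> (golden_ratio * real (fib (Suc k))) powr e"
    unfolding e_def using golden_ratio_gt_1 golden_ratio_pow_le_fib by (intro powr_mono2) auto
  also have "\<dots> = 2 * real (fib (Suc k)) powr e"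
    using golden_ratio_gt_1 by (simp add: powr_mult phi_powr_e)
  finally show ?thesis
    unfolding e_def .
qed

lemma alpha_fun_fib_le_powr:
  "real (alpha_fun (fib (Suc k))) \<le> 6 * real (fib (Suc k)) powr log golden_ratio 2"
proof -
  have "real (alpha_fun (fib (Suc k))) \<le> 3 * 2 ^ k"
    using of_nat_mono[OF alpha_fun_fib_le[of k]] by simp
  with two_pow_le_fib_powr[of k] show ?thesis
    by linarith
qed

lemma ln_div_ln_le_of_le_powr:
  fixes a x C e :: real
  assumes "0 \<le> a" "a \<le> C * x powr e" "1 < x" "1 \<le> C" "0 \<le> e"
  shows "ln a / ln x \<le> e + ln C / ln x"
proof (cases "a = 0")
  case True
  then show ?thesis using assms by simp
next
  case False
  then have "ln a \<le> ln (C * x powr e)"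
    using assms by (subst ln_le_cancel_iff) auto
  also have "\<dots> = e * ln x + ln C"
    using assms by (simp add: ln_mult ln_powr)
  finally show ?thesis
    using assms by (simp add: field_simps)
qed

lemma lim_le_of_subseq_le:
  fixes f :: "nat \<Rightarrow> real" and g :: "nat \<Rightarrow> nat"
  assumes "convergent f" "strict_mono g" "\<And>k. f (g k) \<le> e + c / ln (real (g k))"
  shows "lim f \<le> e"
proof -
  have "(f \<circ> g) \<longlonglongrightarrow> lim f"
    using assms(1,2) by (simp add: convergent_LIMSEQ_iff LIMSEQ_subseq_LIMSEQ)
  moreover have "filterlim (\<lambda>k. ln (real (g k))) at_top sequentially"
    using filterlim_subseq[OF assms(2)]
    by (intro filterlim_compose[OF ln_at_top] filterlim_compose[OF filterlim_real_sequentially])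
  then have "(\<lambda>k. e + c / ln (real (g k))) \<longlonglongrightarrow> e + 0"
    by (intro tendsto_add tendsto_const tendsto_divide_0[OF tendsto_const]
        filterlim_at_top_imp_at_infinity)
  ultimately show ?thesis
    using assms(3) by (intro LIMSEQ_le) (auto simp: comp_def)
qed

lemma log_ratio_fib_le:
  assumes "2 \<le> k"
  shows "log 2 (real (alpha_fun (fib (Suc k)))) / log 2 (real (fib (Suc k)))
    \<le> log golden_ratio 2 + ln 6 / ln (real (fib (Suc k)))"
proof -
  have "2 \<le> fib (Suc k)"
    using fib_mono[of 3 "Suc k"] assms by (simp add: eval_nat_numeral)
  then have "ln (real (alpha_fun (fib (Suc k)))) / ln (real (fib (Suc k)))
      \<le> log golden_ratio 2 + ln 6 / ln (real (fib (Suc k)))"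
    using alpha_fun_fib_le_powr golden_ratio_gt_1 by (intro ln_div_ln_le_of_le_powr) auto
  then show ?thesis
    by (simp add: log_def)
qed

theorem proposition2p6:
  shows "(\<exists>C > 0. \<exists>\<^sub>F n in sequentially.
            real (alpha_fun n) \<le> C * real n powr (log golden_ratio 2))
       \<and> (convergent (\<lambda>n. log 2 (real (alpha_fun n)) / log 2 (real n)) \<longrightarrow>
            lim (\<lambda>n. log 2 (real (alpha_fun n)) / log 2 (real n)) \<le> log golden_ratio 2)"
proof (intro conjI impI)
  show "\<exists>C > 0. \<exists>\<^sub>F n in sequentially. real (alpha_fun n) \<le> C * real n powr (log golden_ratio 2)"
    unfolding frequently_sequentially
    using alpha_fun_fib_le_powr le_fib_Suc by (intro exI[of _ 6]) auto
next
  let ?f = "\<lambda>n. log 2 (real (alpha_fun n)) / log 2 (real n)"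
  assume "convergent ?f"
  moreover have "strict_mono (\<lambda>k. fib (Suc (k + 2)))"
    by (rule strict_mono_Suc_iff[THEN iffD2]) (simp add: fib_neq_0_nat)
  ultimately show "lim ?f \<le> log golden_ratio 2"
    using log_ratio_fib_le by (rule lim_le_of_subseq_le) simp
qed

end
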